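(* Let $n$ be even and let $N$ be a $5$-net of order $n$ with parallel classes $\Pi_0,\dots,\Pi_4$ and a relation $\mathcal R$ of type $(\lambda_0,\dots,\lambda_4)$. Put $g_i=\frac n2-\lambda_i$. Then for every $\mathbf b=(b_0,\dots,b_4)\in\{0,1\}^5$ with an even number of ones, $$t_{\mathbf b}=\frac1{16}n^2+\frac18 n\sum_{i=0}^{4}(-1)^{b_i}g_i+\frac14\sum_{0\le i<j\le 4}(-1)^{b_i+b_j}g_ig_j .$$
   Context: A $k$-net of order $n$ is a set $P$ of $n^2$ points together with a set $L$ of $kn$ lines (subsets of $P$), each line containing $n$ points and each point lying on $k$ lines, such that $L$ partitions into $k$ parallel classes $\Pi_0,\dots,\Pi_{k-1}$ of $n$ pairwise disjoint lines each, and any two lines from different parallel classes meet in exactly one point. A relation on a net is a set $\mathcal R\subseteq L$ such that every point lies on an even number of lines of $\mathcal R$. Its type is $(\lambda_0,\dots,\lambda_{k-1})$ with $\lambda_i=|\mathcal R\cap\Pi_i|$. The type of a point $p$ is the binary string $\mathbf b\in\{0,1\}^k$ with $b_i=1$ iff the line of $\Pi_i$ through $p$ lies in $\mathcal R$; $t_{\mathbf b}$ is the number of points of type $\mathbf b$. *)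

theory Defs
  imports Complex_Main
begin

definition net_lines :: "nat \<Rightarrow> (nat \<Rightarrow> 'p set set) \<Rightarrow> 'p set set" where
  "net_lines k Pi = (\<Union>i<k. Pi i)"

definition is_net :: "nat \<Rightarrow> nat \<Rightarrow> 'p set \<Rightarrow> (nat \<Rightarrow> 'p set set) \<Rightarrow> bool" where
  "is_net k n P Pi \<longleftrightarrow>
     finite P \<and> card P = n^2 \<and>
     finite (net_lines k Pi) \<and> card (net_lines k Pi) = k * n \<and>
     (\<forall>l\<in>net_lines k Pi. l \<subseteq> P \<and> card l = n) \<and>
     (\<forall>p\<in>P. card {l\<in>net_lines k Pi. p \<in> l} = k) \<and>
     (\<forall>i<k. \<forall>j<k. i \<noteq> j \<longrightarrow> Pi i \<inter> Pi j = {}) \<and>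
     (\<forall>i<k. card (Pi i) = n \<and>
        (\<forall>l\<in>Pi i. \<forall>m\<in>Pi i. l \<noteq> m \<longrightarrow> l \<inter> m = {})) \<and>
     (\<forall>i<k. \<forall>j<k. i \<noteq> j \<longrightarrow> (\<forall>l\<in>Pi i. \<forall>m\<in>Pi j. card (l \<inter> m) = 1))"

definition is_relation :: "nat \<Rightarrow> 'p set \<Rightarrow> (nat \<Rightarrow> 'p set set) \<Rightarrow> 'p set set \<Rightarrow> bool" where
  "is_relation k P Pi R \<longleftrightarrow>
     R \<subseteq> net_lines k Pi \<and> (\<forall>p\<in>P. even (card {l\<in>R. p \<in> l}))"

definition rel_type :: "(nat \<Rightarrow> 'p set set) \<Rightarrow> 'p set set \<Rightarrow> nat \<Rightarrow> nat" where
  "rel_type Pi R i = card (R \<inter> Pi i)"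

definition line_through :: "(nat \<Rightarrow> 'p set set) \<Rightarrow> nat \<Rightarrow> 'p \<Rightarrow> 'p set" where
  "line_through Pi i p = (THE l. l \<in> Pi i \<and> p \<in> l)"

definition t_count :: "nat \<Rightarrow> 'p set \<Rightarrow> (nat \<Rightarrow> 'p set set) \<Rightarrow> 'p set set \<Rightarrow> (nat \<Rightarrow> nat) \<Rightarrow> nat" where
  "t_count k P Pi R b = card {p\<in>P. \<forall>i<k. (b i = 1 \<longleftrightarrow> line_through Pi i p \<in> R)}"

end

theory Submission
  imports Defs
begin

text \<open>For a point \<open>p\<close> put \<open>s\<^sub>i = (-1)^(b\<^sub>i + [line of \<Pi>\<^sub>i through p \<in> R])\<close>; then \<open>p\<close> has type \<open>b\<close>
  iff all \<open>s\<^sub>i = 1\<close>, so its indicator is \<open>\<Prod>(1 + s\<^sub>i)/2\<close>. Both \<open>b\<close> and the type of \<open>p\<close> have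
  even weight (the latter because \<open>R\<close> is a relation), so \<open>\<Prod>s\<^sub>i = 1\<close> and the terms of degree
  \<open>d\<close> and \<open>5 - d\<close> of the expanded product coincide: the indicator is
  \<open>(1 + \<Sum>s\<^sub>i + \<Sum>s\<^sub>is\<^sub>j)/16\<close>. Summing over the points, the \<open>\<lambda>\<^sub>i\<close> lines of \<open>R \<inter> \<Pi>\<^sub>i\<close> cover
  \<open>n\<lambda>\<^sub>i\<close> points, and two such families from different classes meet in \<open>\<lambda>\<^sub>i\<lambda>\<^sub>j\<close> points; this
  turns the linear and quadratic terms into \<open>2n g\<^sub>i\<close> and \<open>4 g\<^sub>i g\<^sub>j\<close>.\<close>

lemma is_netD:
  assumes "is_net k n P Pi"
  shows "finite P" "card P = n^2"
    and "\<And>i. i < k \<Longrightarrow> finite (Pi i) \<and> card (Pi i) = n"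
    and "\<And>i l. i < k \<Longrightarrow> l \<in> Pi i \<Longrightarrow> l \<subseteq> P \<and> card l = n"
    and "\<And>i j. i < k \<Longrightarrow> j < k \<Longrightarrow> i \<noteq> j \<Longrightarrow> Pi i \<inter> Pi j = {}"
    and "\<And>i l m. i < k \<Longrightarrow> l \<in> Pi i \<Longrightarrow> m \<in> Pi i \<Longrightarrow> l \<noteq> m \<Longrightarrow> l \<inter> m = {}"
    and "\<And>i j l m. i < k \<Longrightarrow> j < k \<Longrightarrow> i \<noteq> j \<Longrightarrow> l \<in> Pi i \<Longrightarrow> m \<in> Pi j
           \<Longrightarrow> card (l \<inter> m) = 1"
  using assms unfolding is_net_def net_lines_def by (auto intro: finite_subset)

lemma card_Union_lines:
  assumes net: "is_net k n P Pi" and i: "i < k" and L: "L \<subseteq> Pi i"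
  shows "card (\<Union>L) = card L * n"
proof -
  note N = is_netD[OF net]
  have "card (\<Union>L) = sum card L"
  proof (rule card_Union_disjoint)
    show "pairwise disjnt L"
      using N(6)[OF i] L unfolding pairwise_def disjnt_def by blast
    show "finite l" if "l \<in> L" for l
      using N(1) N(4)[OF i] L that by (meson finite_subset subsetD)
  qed
  also have "\<dots> = card L * n" using N(4)[OF i] L by (simp add: subset_iff)
  finally show ?thesis .
qed

lemma net_class_covers:
  assumes net: "is_net k n P Pi" and i: "i < k"
  shows "\<Union>(Pi i) = P"
proof -
  note N = is_netD[OF net]
  have "\<Union>(Pi i) \<subseteq> P" using N(4)[OF i] by blast
  moreover have "card (\<Union>(Pi i)) = card P"
    using card_Union_lines[OF net i order_refl] N(2) N(3)[OF i] by (simp add: power2_eq_square)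
  ultimately show ?thesis using card_subset_eq[OF N(1)] by blast
qed

lemma line_through_class:
  assumes net: "is_net k n P Pi" and "i < k" "p \<in> P"
  shows "line_through Pi i p \<in> Pi i" "p \<in> line_through Pi i p"
proof -
  have "\<exists>!l. l \<in> Pi i \<and> p \<in> l"
    using net_class_covers[OF net] is_netD(6)[OF net] assms(2,3) by blast
  then have "line_through Pi i p \<in> Pi i \<and> p \<in> line_through Pi i p"
    unfolding line_through_def by (rule theI')
  then show "line_through Pi i p \<in> Pi i" "p \<in> line_through Pi i p" by auto
qed

lemma line_through_eqI:
  assumes net: "is_net k n P Pi" and "i < k" "l \<in> Pi i" "p \<in> l"
  shows "line_through Pi i p = l"
  unfolding line_through_def
  using assms is_netD(6)[OF net] by (intro the_equality) blast+

lemma card_points_on_lines: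
  assumes net: "is_net k n P Pi" and i: "i < k"
  shows "card {p\<in>P. line_through Pi i p \<in> L} = card (L \<inter> Pi i) * n"
proof -
  have "{p\<in>P. line_through Pi i p \<in> L} = \<Union>(L \<inter> Pi i)"
    using line_through_class[OF net i] line_through_eqI[OF net i] is_netD(4)[OF net i] by blast
  then show ?thesis using card_Union_lines[OF net i] by simp
qed

lemma card_points_on_lines_pair:
  assumes net: "is_net k n P Pi" and i: "i < k" and j: "j < k" and ij: "i \<noteq> j"
  shows "card {p\<in>P. line_through Pi i p \<in> L \<and> line_through Pi j p \<in> M}
    = card (L \<inter> Pi i) * card (M \<inter> Pi j)"
proof -
  let ?S = "{p\<in>P. line_through Pi i p \<in> L \<and> line_through Pi j p \<in> M}"
  let ?f = "\<lambda>p. (line_through Pi i p, line_through Pi j p)"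
  have meet: "\<exists>a. l \<inter> m = {a}" if "l \<in> Pi i" "m \<in> Pi j" for l m
    using is_netD(7)[OF net i j ij that] by (meson card_1_singletonE)
  have "bij_betw ?f ?S ((L \<inter> Pi i) \<times> (M \<inter> Pi j))"
  proof (rule bij_betw_imageI)
    show "inj_on ?f ?S"
    proof (rule inj_onI)
      fix p q assume p: "p \<in> ?S" and q: "q \<in> ?S" and "?f p = ?f q"
      then have "p \<in> line_through Pi i p \<inter> line_through Pi j p"
        and "q \<in> line_through Pi i p \<inter> line_through Pi j p"
        using line_through_class(2)[OF net i] line_through_class(2)[OF net j] by auto
      moreover obtain a where "line_through Pi i p \<inter> line_through Pi j p = {a}"
        using meet line_through_class(1)[OF net i] line_through_class(1)[OF net j] p by blast
      ultimately show "p = q" by auto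
    qed
    show "?f ` ?S = (L \<inter> Pi i) \<times> (M \<inter> Pi j)"
    proof
      show "?f ` ?S \<subseteq> (L \<inter> Pi i) \<times> (M \<inter> Pi j)"
        using line_through_class(1)[OF net i] line_through_class(1)[OF net j] by auto
      show "(L \<inter> Pi i) \<times> (M \<inter> Pi j) \<subseteq> ?f ` ?S"
      proof clarify
        fix l m assume lm: "l \<in> L" "l \<in> Pi i" "m \<in> M" "m \<in> Pi j"
        then have lines: "l \<in> Pi i" "m \<in> Pi j" by auto
        obtain a where a: "a \<in> l" "a \<in> m" using meet[OF lines] by blast
        have "a \<in> P" using is_netD(4)[OF net i lines(1)] a by blast
        moreover have "?f a = (l, m)"
          using line_through_eqI[OF net i lines(1) a(1)] line_through_eqI[OF net j lines(2) a(2)]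
          by simp
        ultimately show "(l, m) \<in> ?f ` ?S" using lm by (intro image_eqI[where x = a]) auto
      qed
    qed
  qed
  then have "card ?S = card ((L \<inter> Pi i) \<times> (M \<inter> Pi j))" by (rule bij_betw_same_card)
  then show ?thesis by (simp add: card_cartesian_product)
qed

definition point_type :: "(nat \<Rightarrow> 'p set set) \<Rightarrow> 'p set set \<Rightarrow> 'p \<Rightarrow> nat \<Rightarrow> nat" where
  "point_type Pi R p i = of_bool (line_through Pi i p \<in> R)"

lemma relation_parity:
  assumes net: "is_net k n P Pi" and rel: "is_relation k P Pi R" and p: "p \<in> P"
  shows "even (\<Sum>i<k. point_type Pi R p i)"
proof -
  let ?I = "{i. i < k \<and> line_through Pi i p \<in> R}"
  have "bij_betw (\<lambda>i. line_through Pi i p) ?I {l\<in>R. p \<in> l}"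
  proof (rule bij_betw_imageI)
    show "inj_on (\<lambda>i. line_through Pi i p) ?I"
    proof (rule inj_onI)
      fix i j assume "i \<in> ?I" "j \<in> ?I" and eq: "line_through Pi i p = line_through Pi j p"
      then have i: "i < k" and j: "j < k" by auto
      show "i = j"
      proof (rule ccontr)
        assume "i \<noteq> j"
        with is_netD(5)[OF net i j] have "Pi i \<inter> Pi j = {}" .
        then show False
          using line_through_class(1)[OF net i p] line_through_class(1)[OF net j p] eq by auto
      qed
    qed
    show "(\<lambda>i. line_through Pi i p) ` ?I = {l\<in>R. p \<in> l}"
    proof
      show "(\<lambda>i. line_through Pi i p) ` ?I \<subseteq> {l\<in>R. p \<in> l}"
        using line_through_class(2)[OF net _ p] by blast
      show "{l\<in>R. p \<in> l} \<subseteq> (\<lambda>i. line_through Pi i p) ` ?I"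
      proof clarify
        fix l assume l: "l \<in> R" "p \<in> l"
        then obtain i where i: "i < k" "l \<in> Pi i"
          using rel unfolding is_relation_def net_lines_def by blast
        have "line_through Pi i p = l" using line_through_eqI[OF net i l(2)] .
        with i l show "l \<in> (\<lambda>i. line_through Pi i p) ` ?I" by (intro image_eqI[where x = i]) auto
      qed
    qed
  qed
  then have "card ?I = card {l\<in>R. p \<in> l}" by (rule bij_betw_same_card)
  moreover have "(\<Sum>i<k. point_type Pi R p i) = card ?I"
    by (simp add: point_type_def Int_def lessThan_def conj_commute)
  ultimately show ?thesis using rel p unfolding is_relation_def by simp
qed

lemma sum_neg_one_power_of_bool:
  assumes "finite A"
  shows "(\<Sum>x\<in>A. (-1) ^ of_bool (Q x) :: real) = real (card A) - 2 * real (card {x\<in>A. Q x})"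
proof -
  have "(-1) ^ of_bool q = 1 - 2 * (of_bool q :: real)" for q by (cases q) simp_all
  then show ?thesis
    using assms by (simp add: sum_subtractf sum_distrib_left[symmetric] Int_def conj_commute)
qed

lemma sum_neg_one_power_of_bool_pair:
  assumes "finite A"
  shows "(\<Sum>x\<in>A. (-1) ^ (of_bool (Q x) + of_bool (Q' x)) :: real)
    = real (card A) - 2 * real (card {x\<in>A. Q x}) - 2 * real (card {x\<in>A. Q' x})
      + 4 * real (card {x\<in>A. Q x \<and> Q' x})"
proof -
  have "(-1) ^ (of_bool q + of_bool q') =
      1 - 2 * (of_bool q :: real) - 2 * of_bool q' + 4 * of_bool (q \<and> q')" for q q'
    by (cases q; cases q') simp_all
  then show ?thesis
    using assms by (simp add: sum.distrib sum_subtractf sum_distrib_left[symmetric] Int_def conj_commute)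
qed

lemma sum_sign_point_type:
  assumes net: "is_net k n P Pi" and i: "i < k"
  shows "(\<Sum>p\<in>P. (-1) ^ point_type Pi R p i :: real) = n * (n - 2 * real (rel_type Pi R i))"
  using sum_neg_one_power_of_bool[OF is_netD(1)[OF net], of "\<lambda>p. line_through Pi i p \<in> R"]
    is_netD(2)[OF net] card_points_on_lines[OF net i]
  by (simp add: point_type_def rel_type_def power2_eq_square algebra_simps)

lemma sum_sign_point_type_pair:
  assumes net: "is_net k n P Pi" and i: "i < k" and j: "j < k" and "i \<noteq> j"
  shows "(\<Sum>p\<in>P. (-1) ^ (point_type Pi R p i + point_type Pi R p j) :: real)
    = (n - 2 * real (rel_type Pi R i)) * (n - 2 * real (rel_type Pi R j))"
  using sum_neg_one_power_of_bool_pair[OF is_netD(1)[OF net],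
      of "\<lambda>p. line_through Pi i p \<in> R" "\<lambda>p. line_through Pi j p \<in> R"]
    is_netD(2)[OF net]
    card_points_on_lines[OF net i] card_points_on_lines[OF net j]
    card_points_on_lines_pair[OF net i j \<open>i \<noteq> j\<close>]
  by (simp add: point_type_def rel_type_def power2_eq_square algebra_simps)

lemma sum_signs_linear:
  assumes net: "is_net k n P Pi"
  shows "(\<Sum>p\<in>P. \<Sum>i<k. (-1) ^ (b i + point_type Pi R p i))
    = 2 * real n * (\<Sum>i<k. (-1) ^ b i * (real n / 2 - real (rel_type Pi R i)))"
proof -
  have "(\<Sum>p\<in>P. \<Sum>i<k. (-1) ^ (b i + point_type Pi R p i))
      = (\<Sum>i<k. (-1) ^ b i * (\<Sum>p\<in>P. (-1) ^ point_type Pi R p i) :: real)"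
    by (subst sum.swap) (simp add: power_add sum_distrib_left)
  also have "\<dots> = (\<Sum>i<k. 2 * real n * ((-1) ^ b i * (real n / 2 - real (rel_type Pi R i))))"
    by (rule sum.cong) (simp_all add: sum_sign_point_type[OF net] field_simps)
  finally show ?thesis by (simp add: sum_distrib_left)
qed

lemma sum_signs_quadratic:
  assumes net: "is_net k n P Pi"
  shows "(\<Sum>p\<in>P. \<Sum>j<k. \<Sum>i<j. (-1) ^ ((b i + point_type Pi R p i) + (b j + point_type Pi R p j)))
    = 4 * (\<Sum>j<k. \<Sum>i<j. (-1) ^ (b i + b j)
             * (real n / 2 - real (rel_type Pi R i)) * (real n / 2 - real (rel_type Pi R j)))"
proof -
  have "(\<Sum>p\<in>P. \<Sum>j<k. \<Sum>i<j. (-1) ^ ((b i + point_type Pi R p i) + (b j + point_type Pi R p j)))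
      = (\<Sum>j<k. \<Sum>i<j. (-1) ^ (b i + b j)
           * (\<Sum>p\<in>P. (-1) ^ (point_type Pi R p i + point_type Pi R p j)) :: real)"
    by (subst sum.swap, rule sum.cong[OF refl], subst sum.swap)
      (simp add: power_add sum_distrib_left mult_ac)
  also have "\<dots> = (\<Sum>j<k. \<Sum>i<j. 4 * ((-1) ^ (b i + b j)
      * (real n / 2 - real (rel_type Pi R i)) * (real n / 2 - real (rel_type Pi R j))))"
  proof (intro sum.cong refl)
    fix i j :: nat assume "j \<in> {..<k}" "i \<in> {..<j}"
    then have "i < k" "j < k" "i \<noteq> j" by auto
    from sum_sign_point_type_pair[OF net this, of R]
    have "(\<Sum>p\<in>P. (-1) ^ (point_type Pi R p i + point_type Pi R p j))
        = 4 * (real n / 2 - real (rel_type Pi R i)) * (real n / 2 - real (rel_type Pi R j))"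
      by (simp add: field_simps)
    then show "(-1) ^ (b i + b j) * (\<Sum>p\<in>P. (-1) ^ (point_type Pi R p i + point_type Pi R p j))
        = 4 * ((-1) ^ (b i + b j)
          * (real n / 2 - real (rel_type Pi R i)) * (real n / 2 - real (rel_type Pi R j)))"
      by simp
  qed
  finally show ?thesis by (simp add: sum_distrib_left)
qed

lemma indicator_even_parities_5:
  fixes x :: "nat \<Rightarrow> nat"
  assumes "even (\<Sum>i<5. x i)"
  shows "of_bool (\<forall>i<5. even (x i)) =
    1/16 * (1 + (\<Sum>i<5. (-1) ^ x i) + (\<Sum>j<5. \<Sum>i<j. (-1) ^ (x i + x j)) :: real)"
proof -
  have five: "{..<5} = {0, 1, 2, 3, 4 :: nat}" "{..<4} = {0, 1, 2, 3 :: nat}"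
    "{..<3} = {0, 1, 2 :: nat}" "{..<2} = {0, 1 :: nat}" by auto
  have "(\<forall>i<5. even (x i)) \<longleftrightarrow> (\<forall>i\<in>{..<5}. even (x i))" by auto
  with assms show ?thesis
    by (cases "even (x 0)"; cases "even (x 1)"; cases "even (x 2)"; cases "even (x 3)";
        cases "even (x 4)") (simp_all add: five power_add)
qed

theorem mainTheorem2:
  fixes n :: nat and P :: "'p set" and Pi :: "nat \<Rightarrow> 'p set set"
    and R :: "'p set set" and b :: "nat \<Rightarrow> nat"
  assumes "even n"
    and "is_net 5 n P Pi"
    and "is_relation 5 P Pi R"
    and "\<forall>i<5. b i \<in> {0, 1}"
    and "even (\<Sum>i<5. b i)"
  shows "real (t_count 5 P Pi R b) =
           (real n)^2 / 16
         + real n / 8 * (\<Sum>i<5. (-1)^(b i) * (real n / 2 - real (rel_type Pi R i)))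
         + 1/4 * (\<Sum>j<5. \<Sum>i<j. (-1)^(b i + b j)
                    * (real n / 2 - real (rel_type Pi R i))
                    * (real n / 2 - real (rel_type Pi R j)))"
proof -
  note net = assms(2)
  let ?x = "\<lambda>p i. b i + point_type Pi R p i"
  have "(b i = 1 \<longleftrightarrow> line_through Pi i p \<in> R) \<longleftrightarrow> even (?x p i)" if "i < 5" for i p
    using assms(4) that by (cases "b i = 0") (auto simp: point_type_def)
  then have type_iff: "(\<forall>i<5. b i = 1 \<longleftrightarrow> line_through Pi i p \<in> R) \<longleftrightarrow> (\<forall>i<5. even (?x p i))" for p
    by blast
  have parity: "even (\<Sum>i<5. ?x p i)" if "p \<in> P" for p
    using assms(5) relation_parity[OF net assms(3) that] by (simp add: sum.distrib)
  have "real (t_count 5 P Pi R b) = (\<Sum>p\<in>P. of_bool (\<forall>i<5. even (?x p i)))"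
    unfolding t_count_def type_iff
    using is_netD(1)[OF net] by (simp add: Int_def conj_commute del: even_add)
  also have "\<dots> = (\<Sum>p\<in>P. 1/16 * (1 + (\<Sum>i<5. (-1) ^ ?x p i)
      + (\<Sum>j<5. \<Sum>i<j. (-1) ^ (?x p i + ?x p j))))"
    using indicator_even_parities_5[OF parity] by (rule sum.cong[OF refl])
  also have "\<dots> = 1/16 * (real (card P) + (\<Sum>p\<in>P. \<Sum>i<5. (-1) ^ ?x p i)
      + (\<Sum>p\<in>P. \<Sum>j<5. \<Sum>i<j. (-1) ^ (?x p i + ?x p j)))"
    by (simp only: sum_distrib_left[symmetric] sum.distrib) simp
  finally show ?thesis
    unfolding sum_signs_linear[OF net] sum_signs_quadratic[OF net] is_netD(2)[OF net]
    by simp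
qed

end
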